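(* Fix $t\in[T]$ and suppose $\|\theta^*\|_2\le L_\theta$ and $\|\widehat\theta_t-\theta^*\|_{\Sigma_t}\le\beta_t$. Let $p^*_{s,a,s'}=p(s'\mid s,a,\theta^* )$. Then $p^*\in\mathcal P'_t$, the set of $p\in[0,1]^{\mathcal S\times\mathcal A\times\mathcal S}$ such that for all $(s,a)$: $\sum_{s'\in\mathcal S_{s,a}}p_{s,a,s'}=1$ and $\sum_{s'\in\mathcal S_{s,a}}|p_{s,a,s'}-p(s'\mid s,a,\widehat\theta_t)|\le R_{t,s,a}$, where $R_{t,s,a}=2\beta_t\max_{s'\in\mathcal S_{s,a}}\|\varphi(s,a,s')\|_{\Sigma_t^{-1}}$.
   Context: MNL model: finite $\mathcal S,\mathcal A$; known reachable sets $\mathcal S_{s,a}$ and features $\varphi(s,a,s')\in\mathbb R^d$; $p(s'\mid s,a,\theta)=\exp(\varphi(s,a,s')^\top\theta)/\sum_{s''\in\mathcal S_{s,a}}\exp(\varphi(s,a,s'')^\top\theta)$ for $s'\in\mathcal S_{s,a}$; $\theta^*$ the true parameter. $\widehat\theta_t$ and the positive definite $\Sigma_t=\lambda I_d+\sum_{i<t}\nabla^2\ell_i(\widehat\theta_{i+1})$ are the online estimator's iterates; $\beta_t>0$ is the confidence radius. $\|x\|_A=\sqrt{x^\top Ax}$. *)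

theory Defs
  imports "HOL-Analysis.Analysis"
begin

text \<open>MNL transition model. \<open>Ssa s a\<close> is the reachable set \<open>S_{s,a}\<close>; outside it the
  probability is 0.\<close>
definition mnl_prob ::
  "('s \<Rightarrow> 'a \<Rightarrow> 's set) \<Rightarrow> ('s \<Rightarrow> 'a \<Rightarrow> 's \<Rightarrow> real^'d) \<Rightarrow> real^'d \<Rightarrow> 's \<Rightarrow> 'a \<Rightarrow> 's \<Rightarrow> real"
  where "mnl_prob Ssa phi theta s a s' =
    (if s' \<in> Ssa s a
     then exp (phi s a s' \<bullet> theta) / (\<Sum>s''\<in>Ssa s a. exp (phi s a s'' \<bullet> theta))
     else 0)"

definition wnorm :: "real^'d \<Rightarrow> real^'d^'d \<Rightarrow> real"
  where "wnorm x A = sqrt (x \<bullet> (A *v x))"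

definition pos_def_mat :: "real^'d^'d \<Rightarrow> bool"
  where "pos_def_mat A \<longleftrightarrow> transpose A = A \<and> (\<forall>x. x \<noteq> 0 \<longrightarrow> x \<bullet> (A *v x) > 0)"

definition conf_radius ::
  "('s \<Rightarrow> 'a \<Rightarrow> 's set) \<Rightarrow> ('s \<Rightarrow> 'a \<Rightarrow> 's \<Rightarrow> real^'d) \<Rightarrow> real^'d^'d \<Rightarrow> real \<Rightarrow> 's \<Rightarrow> 'a \<Rightarrow> real"
  where "conf_radius Ssa phi Sig beta s a =
    2 * beta * Max ((\<lambda>s'. wnorm (phi s a s') (matrix_inv Sig)) ` Ssa s a)"

definition conf_set ::
  "('s \<Rightarrow> 'a \<Rightarrow> 's set) \<Rightarrow> ('s \<Rightarrow> 'a \<Rightarrow> 's \<Rightarrow> real^'d) \<Rightarrow> real^'d \<Rightarrow> real^'d^'d \<Rightarrow> real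
     \<Rightarrow> ('s \<Rightarrow> 'a \<Rightarrow> 's \<Rightarrow> real) set"
  where "conf_set Ssa phi theta_hat Sig beta =
    {p. (\<forall>s a s'. 0 \<le> p s a s' \<and> p s a s' \<le> 1) \<and>
        (\<forall>s a. (\<Sum>s'\<in>Ssa s a. p s a s') = 1 \<and>
               (\<Sum>s'\<in>Ssa s a. \<bar>p s a s' - mnl_prob Ssa phi theta_hat s a s'\<bar>)
                 \<le> conf_radius Ssa phi Sig beta s a)}"

end

theory Submission
  imports Defs
begin

(* By Cauchy-Schwarz for the dual pair of norms given by Sigma_t and its inverse, the logits
   phi(s,a,s')^T theta* and phi(s,a,s')^T theta_hat differ by at most
   M = beta_t max_s' ||phi(s,a,s')||_{Sigma_t^-1}.  Perturbing the logits of a softmax by at most M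
   moves it by at most 2M in l1: the l1 distance is twice the excess mass on the set A where the
   first distribution dominates, both masses on A are shares Ua/(Ua+Ub), Va/(Va+Vb) whose blocks
   differ by factors at most e^M, and such shares differ by at most (e^M-1)/(e^M+1) <= M. *)

lemma share_diff_le:
  fixes a b c d E :: real
  assumes "0 \<le> a" "0 \<le> b" "0 \<le> c" "0 \<le> d" "0 < a + b" "0 < c + d" "1 \<le> E"
    and "a \<le> E * c" "d \<le> E * b"
  shows "a / (a + b) - c / (c + d) \<le> (E - 1) / (E + 1)"
proof -
  have "c \<le> E\<^sup>2 * c" using assms mult_right_mono[of 1 "E\<^sup>2" c] by simp
  then have Z: "0 < E\<^sup>2 * c + d" using assms by linarith
  have "a * d \<le> (E * c) * (E * b)" using assms by (intro mult_mono) auto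
  then have "a * (E\<^sup>2 * c + d) \<le> E\<^sup>2 * c * (a + b)"
    by (simp add: algebra_simps power2_eq_square)
  then have "a / (a + b) \<le> E\<^sup>2 * c / (E\<^sup>2 * c + d)"
    using Z assms(5) by (simp add: mult_imp_div_pos_le pos_le_divide_eq)
  moreover have "E\<^sup>2 * c / (E\<^sup>2 * c + d) - c / (c + d)
      = (E\<^sup>2 - 1) * c * d / ((E\<^sup>2 * c + d) * (c + d))"
    using Z assms by (simp add: field_simps)
  moreover have "(E\<^sup>2 - 1) * c * d * (E + 1) \<le> (E - 1) * ((E\<^sup>2 * c + d) * (c + d))"
  proof -
    have "0 \<le> (E - 1) * (E * c - d)\<^sup>2" using assms by simp
    then show ?thesis by (simp add: algebra_simps power2_eq_square)
  qed
  then have "(E\<^sup>2 - 1) * c * d / ((E\<^sup>2 * c + d) * (c + d)) \<le> (E - 1) / (E + 1)"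
    using Z assms by (simp add: divide_simps mult.commute)
  ultimately show ?thesis by linarith
qed

lemma exp_tanh_half_le:
  fixes M :: real
  assumes "0 \<le> M"
  shows "(exp M - 1) / (exp M + 1) \<le> M"
proof -
  have "(exp M - 1) / (exp M + 1) \<le> (exp M - 1) / exp M"
    using assms by (intro divide_left_mono) (auto simp: add_pos_pos)
  also have "\<dots> = 1 - exp (- M)" by (simp add: exp_minus field_simps)
  also have "\<dots> \<le> M" using exp_ge_add_one_self[of "- M"] by simp
  finally show ?thesis .
qed

lemma sum_abs_diff_eq_twice_sum_pos:
  fixes p q :: "'i \<Rightarrow> real"
  assumes "finite S" and "(\<Sum>i\<in>S. p i) = (\<Sum>i\<in>S. q i)"
  shows "(\<Sum>i\<in>S. \<bar>p i - q i\<bar>) = 2 * (\<Sum>i\<in>{i\<in>S. q i \<le> p i}. p i - q i)"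
proof -
  define A where "A = {i\<in>S. q i \<le> p i}"
  have split: "(\<Sum>i\<in>S. f i) = (\<Sum>i\<in>A. f i) + (\<Sum>i\<in>S - A. f i)" for f :: "'i \<Rightarrow> real"
    using sum.subset_diff[of A S f] assms(1) by (simp add: A_def add.commute)
  have "(\<Sum>i\<in>S. \<bar>p i - q i\<bar>) = (\<Sum>i\<in>A. \<bar>p i - q i\<bar>) + (\<Sum>i\<in>S - A. \<bar>p i - q i\<bar>)"
    by (rule split)
  also have "\<dots> = (\<Sum>i\<in>A. p i - q i) + (\<Sum>i\<in>S - A. q i - p i)"
    by (intro arg_cong2[where f = "(+)"] sum.cong) (auto simp: A_def)
  also have "(\<Sum>i\<in>S - A. q i - p i) = (\<Sum>i\<in>A. p i - q i)"
    using split[of p] split[of q] assms(2) by (simp add: sum_subtractf)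
  finally show ?thesis by (simp add: A_def)
qed

definition softmax :: "('i \<Rightarrow> real) \<Rightarrow> 'i set \<Rightarrow> 'i \<Rightarrow> real"
  where "softmax u S i = exp (u i) / (\<Sum>j\<in>S. exp (u j))"

lemma softmax_nonneg: "0 \<le> softmax u S i"
  unfolding softmax_def by (simp add: sum_nonneg)

lemma softmax_le_one:
  assumes "finite S" and "i \<in> S"
  shows "softmax u S i \<le> 1"
proof -
  have "exp (u i) \<le> (\<Sum>j\<in>S. exp (u j))" using assms by (intro member_le_sum) auto
  moreover from this have "0 < (\<Sum>j\<in>S. exp (u j))" using exp_gt_zero order_less_le_trans by blast
  ultimately show ?thesis unfolding softmax_def by simp
qed

lemma sum_softmax:
  assumes "finite S" and "S \<noteq> {}"
  shows "(\<Sum>i\<in>S. softmax u S i) = 1"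
proof -
  have "0 < (\<Sum>j\<in>S. exp (u j))" using assms by (intro sum_pos) auto
  then show ?thesis unfolding softmax_def by (simp flip: sum_divide_distrib)
qed

lemma sum_abs_softmax_diff_le:
  fixes u v :: "'i \<Rightarrow> real"
  assumes "finite S" and "S \<noteq> {}" and close: "\<And>i. i \<in> S \<Longrightarrow> \<bar>u i - v i\<bar> \<le> M"
  shows "(\<Sum>i\<in>S. \<bar>softmax u S i - softmax v S i\<bar>) \<le> 2 * M"
proof -
  from \<open>S \<noteq> {}\<close> obtain i0 where "i0 \<in> S" by blast
  with close have "0 \<le> M" by force
  define A where "A = {i\<in>S. softmax v S i \<le> softmax u S i}"
  have "A \<subseteq> S" by (auto simp: A_def)
  define Ua Ub Va Vb
    where "Ua = (\<Sum>i\<in>A. exp (u i))" and "Ub = (\<Sum>i\<in>S - A. exp (u i))"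
      and "Va = (\<Sum>i\<in>A. exp (v i))" and "Vb = (\<Sum>i\<in>S - A. exp (v i))"
  have split: "(\<Sum>i\<in>S. exp (w i)) = (\<Sum>i\<in>A. exp (w i)) + (\<Sum>i\<in>S - A. exp (w i))"
    for w :: "'i \<Rightarrow> real"
    using sum.subset_diff[OF \<open>A \<subseteq> S\<close> \<open>finite S\<close>] by (simp add: add.commute)
  have mass_A: "(\<Sum>i\<in>A. softmax w S i) = (\<Sum>i\<in>A. exp (w i)) / (\<Sum>i\<in>S. exp (w i))"
    for w :: "'i \<Rightarrow> real"
    unfolding softmax_def by (simp flip: sum_divide_distrib)
  have "(\<Sum>i\<in>A. softmax u S i - softmax v S i) = Ua / (Ua + Ub) - Va / (Va + Vb)"
    unfolding sum_subtractf mass_A split Ua_def Ub_def Va_def Vb_def ..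
  also have "\<dots> \<le> (exp M - 1) / (exp M + 1)"
  proof (rule share_diff_le)
    show "0 \<le> Ua" "0 \<le> Ub" "0 \<le> Va" "0 \<le> Vb"
      unfolding Ua_def Ub_def Va_def Vb_def by (auto intro: sum_nonneg)
    show "0 < Ua + Ub" "0 < Va + Vb"
      unfolding Ua_def Ub_def Va_def Vb_def split[symmetric] using assms by (auto intro: sum_pos)
    show "1 \<le> exp M" using \<open>0 \<le> M\<close> by simp
    have "exp (u i) \<le> exp M * exp (v i)" "exp (v i) \<le> exp M * exp (u i)" if "i \<in> S" for i
      using close[OF that] by (simp_all flip: exp_add)
    then show "Ua \<le> exp M * Va" "Vb \<le> exp M * Ub"
      unfolding Ua_def Ub_def Va_def Vb_def sum_distrib_left using \<open>A \<subseteq> S\<close>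
      by (auto intro!: sum_mono)
  qed
  also have "\<dots> \<le> M" using \<open>0 \<le> M\<close> by (rule exp_tanh_half_le)
  finally have "(\<Sum>i\<in>A. softmax u S i - softmax v S i) \<le> M" .
  moreover have "(\<Sum>i\<in>S. \<bar>softmax u S i - softmax v S i\<bar>)
      = 2 * (\<Sum>i\<in>A. softmax u S i - softmax v S i)"
    unfolding A_def using assms(1) sum_softmax[OF assms(1,2)]
    by (intro sum_abs_diff_eq_twice_sum_pos) simp_all
  ultimately show ?thesis by linarith
qed

lemma matrix_inv_right:
  fixes A :: "'a::semiring_1^'n^'m"
  assumes "invertible A"
  shows "A ** matrix_inv A = mat 1"
  using someI_ex[OF assms[unfolded invertible_def]] by (simp add: matrix_inv_def)

lemma inner_symmetric_matrix:
  fixes A :: "real^'n^'n"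
  assumes "transpose A = A"
  shows "(A *v x) \<bullet> y = x \<bullet> (A *v y)"
  by (metis assms dot_lmul_matrix vector_transpose_matrix)

lemma pos_def_mat_form_nonneg: "pos_def_mat A \<Longrightarrow> 0 \<le> x \<bullet> (A *v x)"
  unfolding pos_def_mat_def by (cases "x = 0") (auto intro: less_imp_le)

lemma wnorm_nonneg: "pos_def_mat A \<Longrightarrow> 0 \<le> wnorm x A"
  unfolding wnorm_def by (simp add: pos_def_mat_form_nonneg)

lemma pos_def_mat_invertible:
  assumes "pos_def_mat A"
  shows "invertible A"
proof -
  have "\<forall>x. A *v x = 0 \<longrightarrow> x = 0" using assms unfolding pos_def_mat_def by fastforce
  then show ?thesis by (simp add: invertible_left_inverse flip: matrix_left_invertible_ker)
qed

lemma pos_def_mat_matrix_inv: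
  assumes "pos_def_mat A"
  shows "pos_def_mat (matrix_inv A)"
proof -
  have sym: "transpose A = A" and pos: "\<And>x. x \<noteq> 0 \<Longrightarrow> x \<bullet> (A *v x) > 0"
    using assms by (auto simp: pos_def_mat_def)
  have right: "A ** matrix_inv A = mat 1"
    using assms by (intro matrix_inv_right pos_def_mat_invertible)
  have "transpose (matrix_inv A) = transpose (matrix_inv A) ** (A ** matrix_inv A)"
    by (simp add: right)
  also have "\<dots> = transpose (A ** matrix_inv A) ** matrix_inv A"
    by (simp add: matrix_mul_assoc matrix_transpose_mul sym)
  also have "\<dots> = matrix_inv A" by (simp add: right)
  finally have "transpose (matrix_inv A) = matrix_inv A" .
  moreover have "x \<bullet> (matrix_inv A *v x) > 0" if "x \<noteq> 0" for x
  proof -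
    define y where "y = matrix_inv A *v x"
    have "A *v y = x" by (simp add: y_def matrix_vector_mul_assoc right)
    with that have "y \<noteq> 0" by auto
    then show ?thesis using pos[of y] \<open>A *v y = x\<close> by (simp add: y_def inner_commute)
  qed
  ultimately show ?thesis by (simp add: pos_def_mat_def)
qed

lemma pos_def_mat_Cauchy_Schwarz:
  assumes "pos_def_mat A"
  shows "(x \<bullet> (A *v y))\<^sup>2 \<le> (x \<bullet> (A *v x)) * (y \<bullet> (A *v y))"
proof (cases "y = 0")
  case False
  define c where "c = y \<bullet> (A *v y)"
  define r where "r = (x \<bullet> (A *v y)) / c"
  have "c > 0" using assms False by (simp add: c_def pos_def_mat_def)
  have yx: "y \<bullet> (A *v x) = x \<bullet> (A *v y)"
    using assms inner_symmetric_matrix[of A y x] by (simp add: pos_def_mat_def inner_commute)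
  have "0 \<le> (x - r *\<^sub>R y) \<bullet> (A *v (x - r *\<^sub>R y))"
    using assms by (rule pos_def_mat_form_nonneg)
  also have "\<dots> = x \<bullet> (A *v x) - (x \<bullet> (A *v y))\<^sup>2 / c"
    using \<open>c > 0\<close> yx
    by (simp add: r_def c_def algebra_simps power2_eq_square)
  finally show ?thesis using \<open>c > 0\<close> by (simp add: c_def divide_simps)
qed simp

lemma abs_inner_le_wnorm_dual:
  assumes "pos_def_mat A"
  shows "\<bar>x \<bullet> y\<bar> \<le> wnorm x (matrix_inv A) * wnorm y A"
proof -
  define w where "w = matrix_inv A *v x"
  have "A *v w = x"
    using assms by (simp add: w_def matrix_vector_mul_assoc matrix_inv_right pos_def_mat_invertible)
  then have xy: "x \<bullet> y = w \<bullet> (A *v y)" and xx: "x \<bullet> (matrix_inv A *v x) = w \<bullet> (A *v w)"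
    using assms inner_symmetric_matrix[of A w y] by (auto simp: pos_def_mat_def w_def inner_commute)
  have "\<bar>x \<bullet> y\<bar> = sqrt ((w \<bullet> (A *v y))\<^sup>2)" by (simp add: xy)
  also have "\<dots> \<le> sqrt ((w \<bullet> (A *v w)) * (y \<bullet> (A *v y)))"
    using assms by (intro real_sqrt_le_mono pos_def_mat_Cauchy_Schwarz)
  also have "\<dots> = wnorm x (matrix_inv A) * wnorm y A"
    by (simp add: wnorm_def xx real_sqrt_mult)
  finally show ?thesis .
qed

lemma mnl_prob_softmax:
  "s' \<in> Ssa s a \<Longrightarrow>
    mnl_prob Ssa phi theta s a s' = softmax (\<lambda>s'. phi s a s' \<bullet> theta) (Ssa s a) s'"
  by (simp add: mnl_prob_def softmax_def)

lemma mnl_prob_nonneg: "0 \<le> mnl_prob Ssa phi theta s a s'"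
proof (cases "s' \<in> Ssa s a")
  case True
  then show ?thesis by (simp add: mnl_prob_softmax softmax_nonneg)
qed (simp add: mnl_prob_def)

lemma mnl_prob_le_one:
  assumes "finite (Ssa s a)"
  shows "mnl_prob Ssa phi theta s a s' \<le> 1"
proof (cases "s' \<in> Ssa s a")
  case True
  then show ?thesis using assms by (simp add: mnl_prob_softmax softmax_le_one)
qed (simp add: mnl_prob_def)

lemma sum_mnl_prob:
  "finite (Ssa s a) \<Longrightarrow> Ssa s a \<noteq> {} \<Longrightarrow> (\<Sum>s'\<in>Ssa s a. mnl_prob Ssa phi theta s a s') = 1"
  by (simp add: mnl_prob_softmax sum_softmax cong: sum.cong)

lemma sum_abs_mnl_prob_diff_le:
  assumes "finite (Ssa s a)" and "Ssa s a \<noteq> {}"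
    and "\<And>s'. s' \<in> Ssa s a \<Longrightarrow> \<bar>phi s a s' \<bullet> theta - phi s a s' \<bullet> theta'\<bar> \<le> M"
  shows "(\<Sum>s'\<in>Ssa s a. \<bar>mnl_prob Ssa phi theta s a s' - mnl_prob Ssa phi theta' s a s'\<bar>) \<le> 2 * M"
  using sum_abs_softmax_diff_le[OF assms] by (simp add: mnl_prob_softmax cong: sum.cong)

theorem lemma16:
  fixes Ssa :: "'s::finite \<Rightarrow> 'a::finite \<Rightarrow> 's set"
    and phi :: "'s \<Rightarrow> 'a \<Rightarrow> 's \<Rightarrow> real^'d"
    and theta_star :: "real^'d"
    and theta_hat :: "nat \<Rightarrow> real^'d"
    and Sig :: "nat \<Rightarrow> real^'d^'d"
    and beta :: "nat \<Rightarrow> real"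
    and L_theta :: real and T t :: nat
  assumes reach_ne: "\<And>s a. Ssa s a \<noteq> {}"
    and t_range: "t \<in> {1..T}"
    and Sigma_pd: "pos_def_mat (Sig t)"
    and beta_pos: "beta t > 0"
    and theta_bound: "norm theta_star \<le> L_theta"
    and conf: "wnorm (theta_hat t - theta_star) (Sig t) \<le> beta t"
  shows "mnl_prob Ssa phi theta_star \<in> conf_set Ssa phi (theta_hat t) (Sig t) (beta t)"
proof -
  let ?R = "\<lambda>s a. Max ((\<lambda>s'. wnorm (phi s a s') (matrix_inv (Sig t))) ` Ssa s a)"
  have "\<bar>phi s a s' \<bullet> theta_star - phi s a s' \<bullet> theta_hat t\<bar> \<le> beta t * ?R s a"
    if "s' \<in> Ssa s a" for s a s'
  proof -
    have "\<bar>phi s a s' \<bullet> theta_star - phi s a s' \<bullet> theta_hat t\<bar>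
        = \<bar>phi s a s' \<bullet> (theta_hat t - theta_star)\<bar>"
      by (simp add: inner_diff_right)
    also have "\<dots> \<le> wnorm (phi s a s') (matrix_inv (Sig t))
                   * wnorm (theta_hat t - theta_star) (Sig t)"
      using Sigma_pd by (rule abs_inner_le_wnorm_dual)
    also have "\<dots> \<le> ?R s a * beta t"
      using that conf Sigma_pd by (intro mult_mono' Max_ge wnorm_nonneg pos_def_mat_matrix_inv) auto
    finally show ?thesis by (simp add: mult.commute)
  qed
  then have "(\<Sum>s'\<in>Ssa s a.
        \<bar>mnl_prob Ssa phi theta_star s a s' - mnl_prob Ssa phi (theta_hat t) s a s'\<bar>)
      \<le> conf_radius Ssa phi (Sig t) (beta t) s a" for s a
    unfolding conf_radius_def mult.assoc by (intro sum_abs_mnl_prob_diff_le reach_ne) auto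
  then show ?thesis
    using reach_ne by (simp add: conf_set_def mnl_prob_nonneg mnl_prob_le_one sum_mnl_prob)
qed

end
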